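(* Consider a combinatorial auction with $2$ bidders and $2$ items $a,b$, where both bidders have monotone subadditive valuations. Let $\mathcal M_2$ be the randomized mechanism that selects a bidder $i$ uniformly at random and an item $j$ uniformly at random, allocates item $j$ to bidder $i$, and then runs an ascending second-price auction for the remaining item among both bidders. Then $\mathcal M_2$ achieves a $\frac{4}{3}$-approximation to the optimal social welfare: on every instance its expected welfare under truthful play is at least $\frac34\mathrm{OPT}$.
   Context: A valuation $v:2^{\{a,b\}}\to\mathbb{R}_{\ge0}$ is monotone if $v(T)\le v(T')$ whenever $T\subseteq T'$, and subadditive if $v(T\cup T')\le v(T)+v(T')$ for all $T,T'$. In the auction for the remaining item, each bidder bids her marginal value for that item given the bundle she already holds; the highest bidder wins. $\mathrm{OPT}$ is the maximum of $v_1(T_1)+v_2(T_2)$ over disjoint $T_1,T_2\subseteq\{a,b\}$. *)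

theory Defs
  imports Complex_Main
begin

datatype item = ItemA | ItemB

lemma UNIV_item: "(UNIV :: item set) = {ItemA, ItemB}"
  using item.exhaust by auto

instance item :: finite
  by standard (simp add: UNIV_item)

definition other_item :: "item \<Rightarrow> item" where
  "other_item j = (if j = ItemA then ItemB else ItemA)"

definition nonneg_val :: "(item set \<Rightarrow> real) \<Rightarrow> bool" where
  "nonneg_val v \<longleftrightarrow> (\<forall>T. 0 \<le> v T)"

definition monotone_val :: "(item set \<Rightarrow> real) \<Rightarrow> bool" where
  "monotone_val v \<longleftrightarrow> (\<forall>T T'. T \<subseteq> T' \<longrightarrow> v T \<le> v T')"

definition subadditive_val :: "(item set \<Rightarrow> real) \<Rightarrow> bool" where
  "subadditive_val v \<longleftrightarrow> (\<forall>T T'. v (T \<union> T') \<le> v T + v T')"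

definition OPT :: "(item set \<Rightarrow> real) \<Rightarrow> (item set \<Rightarrow> real) \<Rightarrow> real" where
  "OPT v1 v2 = Max ((\<lambda>(T1, T2). v1 T1 + v2 T2) ` {(T1, T2). T1 \<inter> T2 = {}})"

text \<open>Welfare when item j is given to bidder vi (the other bidder being vk) and the
  remaining item j' is sold to the higher marginal bidder under truthful bidding.
  Ties go to vi (tie-breaking does not affect welfare).\<close>
definition round_welfare ::
  "(item set \<Rightarrow> real) \<Rightarrow> (item set \<Rightarrow> real) \<Rightarrow> item \<Rightarrow> real" where
  "round_welfare vi vk j =
     (let j' = other_item j;
          bi = vi {j, j'} - vi {j};
          bk = vk {j'} - vk {}
      in if bk \<le> bi then vi {j, j'} + vk {} else vi {j} + vk {j'})"

definition M2_welfare :: "(item set \<Rightarrow> real) \<Rightarrow> (item set \<Rightarrow> real) \<Rightarrow> real" where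
  "M2_welfare v1 v2 =
     (1/4) * (\<Sum>j\<in>{ItemA, ItemB}. round_welfare v1 v2 j + round_welfare v2 v1 j)"

end

theory Submission
  imports Defs
begin

text \<open>
  A round of M2 that hands item j to bidder i yields the better of two allocations: i gets
  both items, or i gets j and the other bidder gets the remaining item.  By monotonicity an
  optimal allocation is a partition of the two items, and by symmetry between the bidders it
  either gives both items to one bidder or one item to each.  In either case the optimal
  allocation is available in two of the four rounds, and the allocations available in the
  other two rounds are together worth at least OPT: by subadditivity of the bundle owner's
  valuation in the first case, by monotonicity and nonnegativity in the second.  Hence
  4 M2 \<ge> 3 OPT.
\<close>

lemma item_set_cases:
  obtains "T = {}" | "T = {ItemA}" | "T = {ItemB}" | "T = {ItemA, ItemB}"
proof -
  have "T \<in> Pow {ItemA, ItemB}"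
    by (simp add: UNIV_item [symmetric])
  also have "Pow {ItemA, ItemB} = {{}, {ItemA}, {ItemB}, {ItemA, ItemB}}"
    by (simp add: Pow_insert insert_commute)
  finally show thesis
    using that by blast
qed

lemma other_item_simps [simp]:
  "other_item ItemA = ItemB" "other_item ItemB = ItemA"
  by (simp_all add: other_item_def)

lemma Compl_item_sets [simp]:
  "- {ItemA} = {ItemB}" "- {ItemB} = {ItemA}" "- {ItemA, ItemB} = {}"
  by (auto simp: Compl_eq_Diff_UNIV UNIV_item)

lemma OPT_le_iff:
  "OPT v1 v2 \<le> x \<longleftrightarrow> (\<forall>T1 T2. T1 \<inter> T2 = {} \<longrightarrow> v1 T1 + v2 T2 \<le> x)"
proof -
  let ?A = "{(T1, T2). T1 \<inter> T2 = {}} :: (item set \<times> item set) set"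
  have "finite ?A" and "({}, {}) \<in> ?A"
    by simp_all
  then show ?thesis
    unfolding OPT_def by (subst Max_le_iff) auto
qed

lemma round_welfare_ge_bundle:
  "vi {j, other_item j} + vk {} \<le> round_welfare vi vk j"
  unfolding round_welfare_def Let_def by auto

lemma round_welfare_ge_split:
  "vi {j} + vk {other_item j} \<le> round_welfare vi vk j"
  unfolding round_welfare_def Let_def by auto

lemma M2_welfare_eq:
  "4 * M2_welfare v1 v2 = round_welfare v1 v2 ItemA + round_welfare v1 v2 ItemB
                        + round_welfare v2 v1 ItemA + round_welfare v2 v1 ItemB"
  unfolding M2_welfare_def by simp

lemma M2_welfare_commute: "M2_welfare v1 v2 = M2_welfare v2 v1"
  unfolding M2_welfare_def by simp

lemma grand_bundle_le_M2_welfare: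
  assumes "subadditive_val v1" "monotone_val v2" "nonneg_val v2"
  shows "3 * (v1 {ItemA, ItemB} + v2 {}) \<le> 4 * M2_welfare v1 v2"
proof -
  have "v1 {ItemA, ItemB} \<le> v1 {ItemA} + v1 {ItemB}"
    using assms(1) unfolding subadditive_val_def by (metis insert_is_Un)
  moreover have "v2 {} \<le> v2 {ItemA}" "0 \<le> v2 {ItemB}"
    using assms(2,3) unfolding monotone_val_def nonneg_val_def by auto
  moreover have "v1 {ItemA, ItemB} + v2 {} \<le> round_welfare v1 v2 ItemA"
    and "v1 {ItemA, ItemB} + v2 {} \<le> round_welfare v1 v2 ItemB"
    using round_welfare_ge_bundle [of v1 ItemA v2] round_welfare_ge_bundle [of v1 ItemB v2]
    by (simp_all add: insert_commute)
  moreover have "v2 {ItemA} + v1 {ItemB} \<le> round_welfare v2 v1 ItemA"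
    and "v2 {ItemB} + v1 {ItemA} \<le> round_welfare v2 v1 ItemB"
    using round_welfare_ge_split [of v2 ItemA v1] round_welfare_ge_split [of v2 ItemB v1]
    by simp_all
  ultimately show ?thesis
    unfolding M2_welfare_eq by (simp add: algebra_simps)
qed

lemma split_allocation_le_M2_welfare:
  assumes "monotone_val v1" "nonneg_val v1" "monotone_val v2" "nonneg_val v2"
  shows "3 * (v1 {ItemA} + v2 {ItemB}) \<le> 4 * M2_welfare v1 v2"
proof -
  have "v1 {ItemA} \<le> v1 {ItemA, ItemB}" "0 \<le> v1 {}"
    and "v2 {ItemB} \<le> v2 {ItemA, ItemB}" "0 \<le> v2 {}"
    using assms unfolding monotone_val_def nonneg_val_def by auto
  moreover have "v1 {ItemA} + v2 {ItemB} \<le> round_welfare v1 v2 ItemA"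
    and "v2 {ItemB} + v1 {ItemA} \<le> round_welfare v2 v1 ItemB"
    using round_welfare_ge_split [of v1 ItemA v2] round_welfare_ge_split [of v2 ItemB v1]
    by simp_all
  moreover have "v1 {ItemA, ItemB} + v2 {} \<le> round_welfare v1 v2 ItemB"
    and "v2 {ItemA, ItemB} + v1 {} \<le> round_welfare v2 v1 ItemA"
    using round_welfare_ge_bundle [of v1 ItemB v2] round_welfare_ge_bundle [of v2 ItemA v1]
    by (simp_all add: insert_commute)
  ultimately show ?thesis
    unfolding M2_welfare_eq by (simp add: algebra_simps)
qed

lemma monotone_val_le_Compl:
  assumes "monotone_val v" "T1 \<inter> T2 = {}"
  shows "v T2 \<le> v (- T1)"
proof -
  have "T2 \<subseteq> - T1"
    using assms(2) by blast
  then show ?thesis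
    using assms(1) unfolding monotone_val_def by simp
qed

lemma allocation_le_M2_welfare:
  assumes "nonneg_val v1" "monotone_val v1" "subadditive_val v1"
      and "nonneg_val v2" "monotone_val v2" "subadditive_val v2"
      and "T1 \<inter> T2 = {}"
  shows "3 * (v1 T1 + v2 T2) \<le> 4 * M2_welfare v1 v2"
proof -
  have "3 * (v1 T1 + v2 (- T1)) \<le> 4 * M2_welfare v1 v2"
  proof (cases T1 rule: item_set_cases)
    case 1
    then show ?thesis
      using grand_bundle_le_M2_welfare [of v2 v1] assms
      by (simp add: M2_welfare_commute add.commute UNIV_item)
  next
    case 2
    then show ?thesis
      using split_allocation_le_M2_welfare [of v1 v2] assms by simp
  next
    case 3
    then show ?thesis
      using split_allocation_le_M2_welfare [of v2 v1] assms
      by (simp add: M2_welfare_commute add.commute)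
  next
    case 4
    then show ?thesis
      using grand_bundle_le_M2_welfare [of v1 v2] assms by simp
  qed
  moreover have "v2 T2 \<le> v2 (- T1)"
    using monotone_val_le_Compl assms(5,7) .
  ultimately show ?thesis
    by (simp add: algebra_simps)
qed

theorem claimB3:
  fixes v1 v2 :: "item set \<Rightarrow> real"
  assumes "nonneg_val v1" "monotone_val v1" "subadditive_val v1"
      and "nonneg_val v2" "monotone_val v2" "subadditive_val v2"
  shows "M2_welfare v1 v2 \<ge> (3/4) * OPT v1 v2"
proof -
  have "v1 T1 + v2 T2 \<le> 4/3 * M2_welfare v1 v2" if "T1 \<inter> T2 = {}" for T1 T2
    using allocation_le_M2_welfare [OF assms that] by (simp add: field_simps)
  then have "OPT v1 v2 \<le> 4/3 * M2_welfare v1 v2"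
    unfolding OPT_le_iff by blast
  then show ?thesis
    by linarith
qed

end
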